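(* Assume the setup below and let $\boldsymbol{\lambda}\in\mathcal{P}(l,n)$. Then the $J$-heart $\tau_{\mathbf{r}}(w(\boldsymbol{\lambda}))_J$ of the partition $\tau_{\mathbf{r}}(w(\boldsymbol{\lambda}))$ is the partition whose ($0$-shifted) $\beta$-number is $\chi(\tilde{\mathbf{C}}(\boldsymbol{\lambda}))$ arranged in decreasing order.
   Context: Fix positive integers $l,n$. A partition $\lambda=(\lambda_1\ge\lambda_2\ge\dots)$ has $\lambda_i=0$ for large $i$; $Y(\lambda)=\{(a,b):a\ge1,1\le b\le\lambda_a\}$; the content of $(a,b)$ is $b-a$. $\mathcal{P}(l,n)$ is the set of $l$-multipartitions $\boldsymbol{\lambda}=(\lambda^{(0)},\dots,\lambda^{(l-1)})$ of $n$. For $r\in\mathbb{Z}$, $\beta^r(\lambda)=(\lambda_i+r+1-i)_{i\ge1}$, $\beta(\lambda)=\beta^0(\lambda)$; a strictly decreasing integer sequence stabilising with respect to $r$ (i.e. $C_i=r+1-i$ for large $i$) is $\beta^r$ of a unique partition. For a strictly decreasing integer sequence $C$, $S^iC=(C_1+i,C_2+i,\dots)$. For an $l$-tuple $\mathbf{C}=(C^0,\dots,C^{l-1})$ of strictly decreasing integer sequences, $\chi(\mathbf{C})=\{l(C^q_i-1)+q+1:0\le q\le l-1,\,i\ge1\}$. A node is removable if deleting it leaves a Young diagram; for $J\subseteq\{0,\dots,l-1\}$ it is $J$-removable if removable with content congruent mod $l$ to some $j\in J$; the $J$-heart $\lambda_J$ is obtained by removing $J$-removable nodes as long as possible. Parameters: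 $H_1,\dots,H_{l-1}\in\mathbb{Q}$, $H_0=-(H_1+\dots+H_{l-1})$, $d$ a positive integer with $dH_i\in\mathbb{Z}$; $\theta=(1+H_0,H_1,\dots,H_{l-1})$. $S_l$ = permutations of $\{0,\dots,l-1\}$ generated by $s_i$ ($1\le i\le l-1$) transposing $i-1,i$, acting on $\mathbb{Q}^l$ by: $s_i\cdot\theta$ has entry $\theta_{i-1}+\theta_i$ at $i-1$, $-\theta_i$ at $i$, $\theta_i+\theta_{i+1}$ at $i+1$, otherwise unchanged (indices mod $l$). $R\subset\mathbb{Z}^l$ is generated by $\alpha_i=-e_{i-1}+2e_i-e_{i+1}$ (indices mod $l$); $\tilde{S}_l=R\rtimes S_l$ acts on $\{\theta\in\mathbb{Q}^l:\sum\theta_i=1\}$ with $R$ by translations; $\mathbb{Z}^l_0$ = integer vectors with coordinate sum $0$; $\phi(\mathbf{r})=\sum_j(r_{j-1}-r_j)e_j$ (indices mod $l$). Fix $w_\theta=\phi(\mathbf{r})w\in\tilde{S}_l$ ($\mathbf{r}\in\mathbb{Z}^l_0$, $w\in S_l$) with $\boldsymbol{\epsilon}=w_\theta\cdot\theta$ satisfying $0\le\varepsilon_i\le1$; $J=\{j:\varepsilon_j=0\}$; then $d\boldsymbol{\epsilon}\in\mathbb{Z}^l$. Let $m_i(\mathbf{c})=c_0+\dots+c_i$ and $I_t=\{p:m_p(d\boldsymbol{\epsilon})=t\}$ for $0\le t\le d$. For $\mathbf{s}\in\mathbb{Z}^l$ with $s=\sum s_i$, $\tau_{\mathbf{s}}(\boldsymbol{\lambda})$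 is the partition whose $s$-shifted $\beta$-number is $\chi(\beta^{s_0}(\lambda^{(0)}),\dots,\beta^{s_{l-1}}(\lambda^{(l-1)}))$ arranged decreasingly; $w(\boldsymbol{\lambda})$ has $p$-th component $\lambda^{(w^{-1}(p))}$. Put $C^p(\boldsymbol{\lambda})=\beta^{r_p}(\lambda^{(w^{-1}(p))})$; for $1\le t\le d-1$, $C_{[t]}=\biguplus_{p\in I_t}C^p$ (multiset union) and $C_{[0]}=C_{[d]}=\biguplus_{p\in I_0}S^{-1}C^p\uplus\biguplus_{p\in I_d}C^p$. $\tilde{\mathbf{C}}(\boldsymbol{\lambda})=(\tilde{C}^0,\dots,\tilde{C}^{l-1})$ is the unique $l$-tuple of strictly decreasing integer sequences with $\tilde{C}_{[t]}=C_{[t]}(\boldsymbol{\lambda})$ for all $0\le t\le d$ (same recipe), $\tilde{C}^p\subseteq\tilde{C}^{p-1}$ for all $0\ne p\in J$, and $S^{-1}\tilde{C}^0\subseteq\tilde{C}^{l-1}$ if $0\in I_0$. *)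

theory Defs
  imports Complex_Main "HOL-Combinatorics.Permutations"
begin

text \<open>A partition is a function lam :: nat => nat; lam i is the i-th part for i >= 1.
  The unused value at index 0 is normalised to 0.\<close>

definition is_partition :: "(nat \<Rightarrow> nat) \<Rightarrow> bool" where
  "is_partition lam \<longleftrightarrow> lam 0 = 0 \<and> (\<forall>i\<ge>1. lam (Suc i) \<le> lam i) \<and> (\<exists>N. \<forall>i\<ge>N. lam i = 0)"

definition young :: "(nat \<Rightarrow> nat) \<Rightarrow> (nat \<times> nat) set" where
  "young lam = {(a, b). 1 \<le> a \<and> 1 \<le> b \<and> b \<le> lam a}"

definition psize :: "(nat \<Rightarrow> nat) \<Rightarrow> nat" where
  "psize lam = card (young lam)"

definition content :: "nat \<times> nat \<Rightarrow> int" where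
  "content x = int (snd x) - int (fst x)"

text \<open>beta^r(lambda) = (lambda_i + r + 1 - i)_{i>=1}, represented by its set of values
  (a strictly decreasing sequence is determined by its set of values).\<close>
definition beta_set :: "int \<Rightarrow> (nat \<Rightarrow> nat) \<Rightarrow> int set" where
  "beta_set r lam = {int (lam i) + r + 1 - int i | i. i \<ge> 1}"

definition multipartitions :: "nat \<Rightarrow> nat \<Rightarrow> (nat \<Rightarrow> nat \<Rightarrow> nat) set" where
  "multipartitions l n = {lams. (\<forall>q<l. is_partition (lams q)) \<and> (\<Sum>q<l. psize (lams q)) = n}"

definition removable :: "(nat \<Rightarrow> nat) \<Rightarrow> nat \<times> nat \<Rightarrow> bool" where
  "removable lam x \<longleftrightarrow> x \<in> young lam \<and> (\<exists>mu. is_partition mu \<and> young mu = young lam - {x})"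

definition J_removable :: "nat \<Rightarrow> nat set \<Rightarrow> (nat \<Rightarrow> nat) \<Rightarrow> nat \<times> nat \<Rightarrow> bool" where
  "J_removable l J lam x \<longleftrightarrow> removable lam x \<and> (\<exists>j\<in>J. content x mod int l = int j mod int l)"

definition remove_step :: "nat \<Rightarrow> nat set \<Rightarrow> (nat \<Rightarrow> nat) \<Rightarrow> (nat \<Rightarrow> nat) \<Rightarrow> bool" where
  "remove_step l J lam mu \<longleftrightarrow> is_partition lam \<and> is_partition mu \<and>
     (\<exists>x. J_removable l J lam x \<and> young mu = young lam - {x})"

definition heart :: "nat \<Rightarrow> nat set \<Rightarrow> (nat \<Rightarrow> nat) \<Rightarrow> (nat \<Rightarrow> nat)" where
  "heart l J lam = (THE nu. (remove_step l J)\<^sup>*\<^sup>* lam nu \<and> \<not> (\<exists>x. J_removable l J nu x))"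

definition chi :: "nat \<Rightarrow> (nat \<Rightarrow> int set) \<Rightarrow> int set" where
  "chi l C = {int l * (c - 1) + int q + 1 | q c. q < l \<and> c \<in> C q}"

definition tau :: "nat \<Rightarrow> (nat \<Rightarrow> int) \<Rightarrow> (nat \<Rightarrow> nat \<Rightarrow> nat) \<Rightarrow> (nat \<Rightarrow> nat)" where
  "tau l s lams = (THE nu. is_partition nu \<and>
      beta_set (\<Sum>q<l. s q) nu = chi l (\<lambda>q. beta_set (s q) (lams q)))"

definition perm_mp :: "(nat \<Rightarrow> nat) \<Rightarrow> (nat \<Rightarrow> nat \<Rightarrow> nat) \<Rightarrow> (nat \<Rightarrow> nat \<Rightarrow> nat)" where
  "perm_mp w lams = (\<lambda>p. lams (inv w p))"

text \<open>theta = (1 + H_0, H_1, ..., H_{l-1}) with H_0 = -(H_1 + ... + H_{l-1}).\<close>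
definition theta :: "nat \<Rightarrow> (nat \<Rightarrow> rat) \<Rightarrow> nat \<Rightarrow> rat" where
  "theta l H i = (if i = 0 then 1 - (\<Sum>j\<in>{1..<l}. H j) else H i)"

definition alpha :: "nat \<Rightarrow> nat \<Rightarrow> nat \<Rightarrow> int" where
  "alpha l i j = (if j = i mod l then 2 else 0) - (if j = (i + l - 1) mod l then 1 else 0)
                  - (if j = (i + 1) mod l then 1 else 0)"

text \<open>s_i . theta = theta - theta_i alpha_i (for l >= 3 this is exactly: entry
  theta_{i-1}+theta_i at i-1, -theta_i at i, theta_i+theta_{i+1} at i+1, rest unchanged).\<close>
definition s_act :: "nat \<Rightarrow> nat \<Rightarrow> (nat \<Rightarrow> rat) \<Rightarrow> (nat \<Rightarrow> rat)" where
  "s_act l i th = (\<lambda>j. th j - th i * of_int (alpha l i j))"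

definition perm_word :: "nat list \<Rightarrow> (nat \<Rightarrow> nat)" where
  "perm_word ws = foldr (\<lambda>i f. Transposition.transpose (i - 1) i \<circ> f) ws id"

definition act_word :: "nat \<Rightarrow> nat list \<Rightarrow> (nat \<Rightarrow> rat) \<Rightarrow> (nat \<Rightarrow> rat)" where
  "act_word l ws th = foldr (s_act l) ws th"

definition Sl_act :: "nat \<Rightarrow> (nat \<Rightarrow> nat) \<Rightarrow> (nat \<Rightarrow> rat) \<Rightarrow> (nat \<Rightarrow> rat)" where
  "Sl_act l w th = act_word l (SOME ws. set ws \<subseteq> {1..<l} \<and> perm_word ws = w) th"

definition phi :: "nat \<Rightarrow> (nat \<Rightarrow> int) \<Rightarrow> nat \<Rightarrow> int" where
  "phi l r j = r ((j + l - 1) mod l) - r j"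

text \<open>epsilon = w_theta . theta with w_theta = phi(r) w (phi(r) acting by translation).\<close>
definition eps :: "nat \<Rightarrow> (nat \<Rightarrow> rat) \<Rightarrow> (nat \<Rightarrow> int) \<Rightarrow> (nat \<Rightarrow> nat) \<Rightarrow> nat \<Rightarrow> rat" where
  "eps l H r w = (\<lambda>j. Sl_act l w (theta l H) j + of_int (phi l r j))"

definition Jset :: "nat \<Rightarrow> (nat \<Rightarrow> rat) \<Rightarrow> nat set" where
  "Jset l e = {j. j < l \<and> e j = 0}"

definition Iset :: "nat \<Rightarrow> nat \<Rightarrow> (nat \<Rightarrow> rat) \<Rightarrow> nat \<Rightarrow> nat set" where
  "Iset l d e t = {p. p < l \<and> (\<Sum>k\<le>p. of_nat d * e k) = of_nat t}"

definition Cseq :: "(nat \<Rightarrow> int) \<Rightarrow> (nat \<Rightarrow> nat) \<Rightarrow> (nat \<Rightarrow> nat \<Rightarrow> nat) \<Rightarrow> nat \<Rightarrow> int set" where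
  "Cseq r w lams p = beta_set (r p) (lams (inv w p))"

text \<open>C_[t] as a multiset of integers, given by its multiplicity function
  (S^{-1} C contains x iff C contains x + 1).\<close>
definition Cbr :: "nat \<Rightarrow> nat \<Rightarrow> (nat \<Rightarrow> rat) \<Rightarrow> (nat \<Rightarrow> int set) \<Rightarrow> nat \<Rightarrow> int \<Rightarrow> nat" where
  "Cbr l d e C t x =
     (if 1 \<le> t \<and> t \<le> d - 1 then card {p \<in> Iset l d e t. x \<in> C p}
      else card {p \<in> Iset l d e 0. x + 1 \<in> C p} + card {p \<in> Iset l d e d. x \<in> C p})"

text \<open>Strictly decreasing integer sequences correspond exactly to infinite subsets of Z
  bounded above (their value sets).\<close>
definition Ctilde :: "nat \<Rightarrow> nat \<Rightarrow> (nat \<Rightarrow> rat) \<Rightarrow> (nat \<Rightarrow> int set) \<Rightarrow> (nat \<Rightarrow> int set)" where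
  "Ctilde l d e C = (THE Ct.
      (\<forall>q<l. infinite (Ct q) \<and> bdd_above (Ct q)) \<and> (\<forall>q\<ge>l. Ct q = {}) \<and>
      (\<forall>t\<le>d. Cbr l d e Ct t = Cbr l d e C t) \<and>
      (\<forall>p\<in>Jset l e. p \<noteq> 0 \<longrightarrow> Ct p \<subseteq> Ct (p - 1)) \<and>
      (0 \<in> Iset l d e 0 \<longrightarrow> {x. x + 1 \<in> Ct 0} \<subseteq> Ct (l - 1)))"

end

theory Submission
  imports Defs
begin

(* Read partitions through their beta sets and distribute a beta set over the l runners of an
   abacus, so that chi reassembles the runners. Removing a J-removable node of content c slides
   the bead at c + 1 into the gap at c, where c is congruent mod l to some j in J. On the abacus
   this moves a bead from runner j to runner j - 1 at the same height, or from runner 0 to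
   runner l - 1 one step lower; since eps_j = 0, both runners lie in the same I_t, resp. in I_0 and I_d, so every
   multiset C_[t] is preserved along the whole removal process. At the J-heart no bead can slide
   any more, which is exactly the nesting required of C-tilde. Within a block the runners are
   linearly ordered, and a nested family of sets is determined by its multiset union, since the
   runners containing a given integer form an initial segment of that order. Hence the runners
   of the J-heart are C-tilde, and in particular the J-heart is well defined. *)

section \<open>Beta sets of partitions\<close>

definition beta_entry :: "int \<Rightarrow> (nat \<Rightarrow> nat) \<Rightarrow> nat \<Rightarrow> int" where
  "beta_entry r lam i = int (lam i) + r + 1 - int i"

lemma beta_set_eq_image: "beta_set r lam = beta_entry r lam ` {1..}"
  unfolding beta_set_def beta_entry_def by auto

lemma partition_antimono:
  assumes "is_partition lam" "1 \<le> i" "i \<le> j"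
  shows "lam j \<le> lam i"
  using assms(3)
proof (induction j rule: dec_induct)
  case (step k)
  then show ?case using assms(1,2) unfolding is_partition_def by (metis le_trans)
qed simp

lemma partition_eventually_zero:
  assumes "is_partition lam"
  obtains K where "1 \<le> K" "\<And>i. K \<le> i \<Longrightarrow> lam i = 0"
proof -
  obtain N where "\<forall>i\<ge>N. lam i = 0" using assms unfolding is_partition_def by auto
  then show ?thesis using that[of "max 1 N"] by auto
qed

lemma beta_entry_less_iff:
  assumes "is_partition lam" "1 \<le> i" "1 \<le> j"
  shows "beta_entry r lam i < beta_entry r lam j \<longleftrightarrow> j < i"
proof -
  have "beta_entry r lam i < beta_entry r lam j" if "1 \<le> j" "j < i" for i j
    using partition_antimono[OF assms(1) that(1), of i] that unfolding beta_entry_def by simp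
  then show ?thesis using assms(2,3) by (metis linorder_neqE_nat not_less_iff_gr_or_eq)
qed

lemma beta_entry_eq_iff:
  assumes "is_partition lam" "1 \<le> i" "1 \<le> j"
  shows "beta_entry r lam i = beta_entry r lam j \<longleftrightarrow> i = j"
  using beta_entry_less_iff[OF assms, of r] beta_entry_less_iff[OF assms(1,3,2), of r]
  by (cases i j rule: linorder_cases) auto

lemma inj_on_beta_entry: "is_partition lam \<Longrightarrow> inj_on (beta_entry r lam) {1..}"
  by (auto intro: inj_onI simp: beta_entry_eq_iff)

lemma card_beta_set_greater:
  assumes "is_partition lam" "1 \<le> i"
  shows "card {z \<in> beta_set r lam. beta_entry r lam i < z} = i - 1"
proof -
  have "{z \<in> beta_set r lam. beta_entry r lam i < z} = beta_entry r lam ` {1..<i}"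
    using assms by (auto simp: beta_set_eq_image beta_entry_less_iff)
  moreover have "inj_on (beta_entry r lam) {1..<i}"
    by (rule inj_on_subset[OF inj_on_beta_entry[OF assms(1)]]) auto
  ultimately show ?thesis by (simp add: card_image)
qed

lemma beta_set_inject:
  assumes "is_partition lam" "is_partition mu" "beta_set r lam = beta_set r mu"
  shows "lam = mu"
proof
  fix i
  show "lam i = mu i"
  proof (cases "i = 0")
    case True
    then show ?thesis using assms(1,2) unfolding is_partition_def by simp
  next
    case False
    then have "beta_entry r lam i \<in> beta_set r mu" using assms(3) by (auto simp: beta_set_eq_image)
    then obtain j where j: "1 \<le> j" "beta_entry r lam i = beta_entry r mu j"
      by (auto simp: beta_set_eq_image)
    then have "i - 1 = j - 1"
      using card_beta_set_greater[OF assms(1), of i r] card_beta_set_greater[OF assms(2) j(1), of r]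
        assms(3) False by simp
    then have "i = j" using j(1) False by simp
    then show ?thesis using j unfolding beta_entry_def by simp
  qed
qed

text \<open>A set \<open>S\<close> of integers is the \<open>r\<close>-shifted beta set of a partition iff, for some cut
  \<open>N\<close>, it contains everything below \<open>N\<close> and exactly \<open>r + 1 - N\<close> elements from \<open>N\<close> on.\<close>
definition beta_cut :: "int \<Rightarrow> int set \<Rightarrow> int \<Rightarrow> bool" where
  "beta_cut r S N \<longleftrightarrow> {..<N} \<subseteq> S \<and> finite (S \<inter> {N..}) \<and> int (card (S \<inter> {N..})) = r + 1 - N"

lemma eventually_beta_cut:
  assumes "is_partition lam"
  shows "eventually (beta_cut r (beta_set r lam)) at_bot"
proof -
  obtain K where K: "1 \<le> K" "\<And>i. K \<le> i \<Longrightarrow> lam i = 0"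
    using partition_eventually_zero[OF assms] by blast
  have tail: "beta_entry r lam (nat (r + 1 - y)) = y" "1 \<le> nat (r + 1 - y)"
    if "y \<le> r + 1 - int K" for y
    using that K by (auto simp: beta_entry_def)
  have "beta_cut r (beta_set r lam) N" if N: "N \<le> r + 1 - int K" for N
  proof -
    define i0 where "i0 = nat (r + 1 - N)"
    have i0: "beta_entry r lam i0 = N" "1 \<le> i0" using tail[OF N] unfolding i0_def by simp_all
    have "{..<N} \<subseteq> beta_set r lam"
    proof
      fix y assume "y \<in> {..<N}"
      then have "y \<le> r + 1 - int K" using N by simp
      then show "y \<in> beta_set r lam"
        unfolding beta_set_eq_image using tail by (metis atLeast_iff image_eqI)
    qed
    moreover have "beta_set r lam \<inter> {N..} = beta_entry r lam ` {1..i0}"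
      using i0 assms by (auto simp: beta_set_eq_image beta_entry_less_iff simp flip: not_less)
    moreover have "inj_on (beta_entry r lam) {1..i0}"
      by (rule inj_on_subset[OF inj_on_beta_entry[OF assms]]) auto
    ultimately show ?thesis
      unfolding beta_cut_def using i0 by (simp add: card_image i0_def)
  qed
  then show ?thesis unfolding eventually_at_bot_linorder by blast
qed

lemma beta_cut_imp_partition:
  assumes "beta_cut r S N"
  obtains lam where "is_partition lam" "beta_set r lam = S"
proof -
  define T where "T = S \<inter> {N..}"
  define m where "m = card T"
  have fin: "finite T" and m: "int m = r + 1 - N" and below: "{..<N} \<subseteq> S"
    using assms unfolding beta_cut_def T_def m_def by auto
  obtain xs where xs: "sorted_wrt (<) xs" "set xs = T" "length xs = m"
    using finite_set_strict_sorted[OF fin] unfolding m_def by metis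
  \<comment> \<open>\<open>s i\<close> is the \<open>i\<close>-th largest element of \<open>S\<close>\<close>
  define s where "s i = (if i \<le> m then xs ! (m - i) else r + 1 - int i)" for i
  have s_in_T: "s i \<in> T" if "1 \<le> i" "i \<le> m" for i
    using that xs unfolding s_def by auto
  have s_decr: "s (Suc i) < s i" if "1 \<le> i" for i
  proof (cases "Suc i \<le> m")
    case True
    then show ?thesis using sorted_wrt_nth_less[OF xs(1), of "m - Suc i" "m - i"] xs(3) that
      unfolding s_def by simp
  next
    case False
    moreover have "N \<le> s m" if "m = i" using s_in_T[of m] that \<open>1 \<le> i\<close> unfolding T_def by auto
    ultimately show ?thesis using m unfolding s_def by auto
  qed
  have s_lower: "r + 1 - int i \<le> s i" if "1 \<le> i" for i
  proof (cases "i \<le> m")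
    case True
    then show ?thesis using that
    proof (induction i rule: inc_induct)
      case base
      then show ?case using s_in_T[of m] m unfolding T_def by auto
    next
      case (step k)
      then show ?case using s_decr[of k] by simp
    qed
  qed (simp add: s_def)
  define lam where "lam i = (if i = 0 then 0 else nat (s i - r - 1 + int i))" for i
  have entry: "beta_entry r lam i = s i" if "1 \<le> i" for i
    using s_lower[OF that] that unfolding beta_entry_def lam_def by simp
  have "is_partition lam"
    unfolding is_partition_def
  proof (intro conjI allI impI)
    show "\<exists>N. \<forall>i\<ge>N. lam i = 0" by (auto simp: lam_def s_def intro!: exI[of _ "Suc m"])
    show "lam (Suc i) \<le> lam i" if "1 \<le> i" for i
      using s_decr[OF that] s_lower[OF that] that unfolding lam_def by simp
  qed (simp add: lam_def)
  moreover have "beta_set r lam = S"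
  proof -
    have "s ` {1..m} = T"
    proof
      show "s ` {1..m} \<subseteq> T" using s_in_T by auto
      show "T \<subseteq> s ` {1..m}"
      proof
        fix z assume "z \<in> T"
        then obtain k where "k < m" "z = xs ! k" using xs(2,3) by (metis in_set_conv_nth)
        then show "z \<in> s ` {1..m}" unfolding s_def by (intro image_eqI[of _ _ "m - k"]) auto
      qed
    qed
    moreover have "s ` {Suc m..} = {..<N}"
    proof
      show "s ` {Suc m..} \<subseteq> {..<N}" using m unfolding s_def by auto
      show "{..<N} \<subseteq> s ` {Suc m..}"
      proof
        fix y assume "y \<in> {..<N}"
        then show "y \<in> s ` {Suc m..}"
          using m unfolding s_def by (intro image_eqI[of _ _ "nat (r + 1 - y)"]) auto
      qed
    qed
    moreover have "{1..} = {1..m} \<union> {Suc m..}" by auto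
    ultimately have "s ` {1..} = T \<union> {..<N}" by (simp add: image_Un)
    also have "\<dots> = S" using below unfolding T_def by auto
    finally have "s ` {1..} = S" .
    moreover have "beta_entry r lam ` {1..} = s ` {1..}" using entry by (intro image_cong) auto
    ultimately show ?thesis unfolding beta_set_eq_image by simp
  qed
  ultimately show ?thesis using that by blast
qed

lemma young_row: "1 \<le> a \<Longrightarrow> {b. (a, b) \<in> young lam} = {1..lam a}"
  unfolding young_def by auto

lemma finite_young:
  assumes "is_partition lam"
  shows "finite (young lam)"
proof -
  obtain K where K: "1 \<le> K" "\<And>i. K \<le> i \<Longrightarrow> lam i = 0"
    using partition_eventually_zero[OF assms] by blast
  have "young lam \<subseteq> {1..K} \<times> {1..lam 1}"
  proof
    fix x assume "x \<in> young lam"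
    then obtain a b where x: "x = (a, b)" "1 \<le> a" "1 \<le> b" "b \<le> lam a" unfolding young_def by auto
    then have "a < K" using K(2)[of a] by (cases "a < K") auto
    moreover have "lam a \<le> lam 1" using partition_antimono[OF assms, of 1 a] x by simp
    ultimately show "x \<in> {1..K} \<times> {1..lam 1}" using x by auto
  qed
  then show ?thesis by (rule finite_subset) simp
qed

lemma remove_node_shape:
  assumes "is_partition lam" "is_partition mu" "x \<in> young lam" "young mu = young lam - {x}"
  obtains a where "1 \<le> a" "1 \<le> lam a" "x = (a, lam a)" "mu = lam(a := lam a - 1)"
proof -
  obtain a b where x: "x = (a, b)" "1 \<le> a" "1 \<le> b" "b \<le> lam a"
    using assms(3) unfolding young_def by auto
  have row: "{1..mu a'} = {1..lam a'} - (if a' = a then {b} else {})" if "1 \<le> a'" for a'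
    using young_row[OF that, of mu] young_row[OF that, of lam] assms(4) x(1) by auto
  have other_rows: "mu a' = lam a'" if "a' \<noteq> a" for a'
  proof (cases "a' = 0")
    case True
    then show ?thesis using assms(1,2) unfolding is_partition_def by simp
  next
    case False
    then show ?thesis using arg_cong[where f=card, OF row[of a']] that by simp
  qed
  have row_a: "{1..mu a} = {1..lam a} - {b}" using row[OF x(2)] by simp
  have "mu a = card ({1..lam a} - {b})" using arg_cong[where f=card, OF row_a] by simp
  also have "\<dots> = lam a - 1" using x by (simp add: card_Diff_singleton)
  finally have mu_a: "mu a = lam a - 1" .
  have "b = lam a"
  proof (rule ccontr)
    assume "b \<noteq> lam a"
    then have "lam a \<in> {1..mu a}" using row_a x by auto
    then show False using mu_a x by simp
  qed
  moreover have "mu = lam(a := lam a - 1)" using other_rows mu_a by auto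
  ultimately show ?thesis using that[of a] x by auto
qed

lemma beta_set_remove_node:
  assumes "is_partition lam" "is_partition mu" "x \<in> young lam" "young mu = young lam - {x}"
  defines "v \<equiv> content x + 1"
  shows "v \<in> beta_set 0 lam" "v - 1 \<notin> beta_set 0 lam"
    "beta_set 0 mu = insert (v - 1) (beta_set 0 lam - {v})"
proof -
  obtain a where a: "1 \<le> a" "1 \<le> lam a" "x = (a, lam a)" "mu = lam(a := lam a - 1)"
    using remove_node_shape[OF assms(1-4)] by blast
  have v: "v = beta_entry 0 lam a" unfolding v_def a(3) content_def beta_entry_def by simp
  show "v \<in> beta_set 0 lam" unfolding v beta_set_eq_image using a(1) by auto
  have "lam (Suc a) \<le> lam a - 1"
    using assms(2) a(1,4) unfolding is_partition_def by (metis fun_upd_other fun_upd_same n_not_Suc_n)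
  then have next_entry: "beta_entry 0 lam (Suc a) < v - 1"
    using a(2) unfolding v beta_entry_def by simp
  show "v - 1 \<notin> beta_set 0 lam"
  proof
    assume "v - 1 \<in> beta_set 0 lam"
    then obtain i where i: "1 \<le> i" "v - 1 = beta_entry 0 lam i" by (auto simp: beta_set_eq_image)
    show False
    proof (cases "i \<le> a")
      case True
      then show False using beta_entry_less_iff[OF assms(1) a(1) i(1), of 0] i(2) unfolding v by simp
    next
      case False
      then show False using beta_entry_less_iff[OF assms(1) i(1), of "Suc a" 0] i(2) next_entry
        by (cases "i = Suc a") auto
    qed
  qed
  have mu_entry: "beta_entry 0 mu i = (if i = a then v - 1 else beta_entry 0 lam i)" for i
    using a(2,4) unfolding v beta_entry_def by auto
  have "beta_set 0 mu = insert (v - 1) (beta_entry 0 lam ` ({1..} - {a}))"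
    unfolding beta_set_eq_image using a(1) by (auto simp: mu_entry image_iff)
  also have "beta_entry 0 lam ` ({1..} - {a}) = beta_set 0 lam - {v}"
    unfolding beta_set_eq_image v using inj_on_beta_entry[OF assms(1), of 0] a(1)
    by (auto simp: inj_on_def)
  finally show "beta_set 0 mu = insert (v - 1) (beta_set 0 lam - {v})" .
qed

lemma removable_end_of_row:
  assumes "is_partition lam" "1 \<le> a" "lam (Suc a) < lam a"
  shows "removable lam (a, lam a)"
proof -
  define mu where "mu = lam(a := lam a - 1)"
  have "is_partition mu"
    unfolding is_partition_def
  proof (intro conjI allI impI)
    show "mu 0 = 0" using assms(1,2) unfolding mu_def is_partition_def by simp
    obtain N where "\<forall>i\<ge>N. lam i = 0" using assms(1) unfolding is_partition_def by auto
    then show "\<exists>N. \<forall>i\<ge>N. mu i = 0" unfolding mu_def by (intro exI[of _ "max N (Suc a)"]) auto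
    fix i :: nat
    assume "1 \<le> i"
    then show "mu (Suc i) \<le> mu i"
      using assms partition_antimono[OF assms(1), of i "Suc i"] unfolding mu_def by auto
  qed
  moreover have "young mu = young lam - {(a, lam a)}"
    unfolding young_def mu_def by (auto split: if_splits)
  moreover have "(a, lam a) \<in> young lam" unfolding young_def using assms by auto
  ultimately show ?thesis unfolding removable_def by blast
qed

lemma pred_in_beta_set_if_no_J_removable:
  assumes "is_partition lam" "\<not> (\<exists>x. J_removable l J lam x)"
    "v \<in> beta_set 0 lam" "j \<in> J" "(v - 1) mod int l = int j mod int l"
  shows "v - 1 \<in> beta_set 0 lam"
proof (rule ccontr)
  assume gap: "v - 1 \<notin> beta_set 0 lam"
  obtain a where a: "1 \<le> a" "v = beta_entry 0 lam a"
    using assms(3) by (auto simp: beta_set_eq_image)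
  have "beta_entry 0 lam (Suc a) \<in> beta_set 0 lam" by (auto simp: beta_set_eq_image)
  then have "lam (Suc a) \<noteq> lam a" using gap a unfolding beta_entry_def by auto
  then have "lam (Suc a) < lam a" using partition_antimono[OF assms(1) a(1), of "Suc a"] by simp
  moreover have "content (a, lam a) = v - 1" using a unfolding content_def beta_entry_def by simp
  ultimately have "J_removable l J lam (a, lam a)"
    unfolding J_removable_def using removable_end_of_row[OF assms(1) a(1)] assms(4,5) by auto
  then show False using assms(2) by blast
qed

lemma ex_J_heart:
  assumes "is_partition lam"
  shows "\<exists>nu. (remove_step l J)\<^sup>*\<^sup>* lam nu \<and> \<not> (\<exists>x. J_removable l J nu x)"
  using assms
proof (induction "psize lam" arbitrary: lam rule: less_induct)
  case less
  show ?case
  proof (cases "\<exists>x. J_removable l J lam x")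
    case True
    then obtain x mu where x: "J_removable l J lam x" "x \<in> young lam"
      and mu: "is_partition mu" "young mu = young lam - {x}"
      unfolding J_removable_def removable_def by blast
    have "remove_step l J lam mu" unfolding remove_step_def using less.prems mu x by blast
    moreover have "psize mu < psize lam" unfolding psize_def mu(2)
      by (rule card_Diff1_less[OF finite_young[OF less.prems] x(2)])
    ultimately show ?thesis
      using less.hyps mu(1) by (meson converse_rtranclp_into_rtranclp)
  qed blast
qed

section \<open>Runners of the abacus\<close>

definition bead :: "nat \<Rightarrow> nat \<Rightarrow> int \<Rightarrow> int" where
  "bead l q c = int l * (c - 1) + int q + 1"

definition runner :: "nat \<Rightarrow> int set \<Rightarrow> nat \<Rightarrow> int set" where
  "runner l B q = (if q < l then {c. bead l q c \<in> B} else {})"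

lemma chi_eq_bead_image: "chi l C = {bead l q c | q c. q < l \<and> c \<in> C q}"
  unfolding chi_def bead_def ..

lemma bead_minus_1_mod: "q < l \<Longrightarrow> (bead l q c - 1) mod int l = int q"
  unfolding bead_def by simp

lemma bead_eq_iff:
  assumes "q < l" "q' < l"
  shows "bead l q c = bead l q' c' \<longleftrightarrow> q = q' \<and> c = c'"
proof
  assume eq: "bead l q c = bead l q' c'"
  then have "q = q'" using bead_minus_1_mod[OF assms(1), of c] bead_minus_1_mod[OF assms(2), of c'] by simp
  then show "q = q' \<and> c = c'" using eq assms unfolding bead_def by simp
qed simp

lemma bead_cases:
  assumes "0 < l"
  obtains q c where "q < l" "y = bead l q c"
proof
  show "nat ((y - 1) mod int l) < l" using assms by (simp add: nat_less_iff)
  show "y = bead l (nat ((y - 1) mod int l)) ((y - 1) div int l + 1)"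
    using assms unfolding bead_def by (simp add: mult.commute[of "int l"])
qed

lemma chi_runner:
  assumes "0 < l"
  shows "chi l (runner l B) = B"
proof (intro equalityI subsetI)
  fix y assume "y \<in> B"
  obtain q c where "q < l" "y = bead l q c" using bead_cases[OF assms] .
  then show "y \<in> chi l (runner l B)"
    using \<open>y \<in> B\<close> unfolding chi_eq_bead_image runner_def by auto
qed (auto simp: chi_eq_bead_image runner_def)

lemma runner_chi: "q < l \<Longrightarrow> runner l (chi l C) q = C q"
  unfolding chi_eq_bead_image runner_def by (auto simp: bead_eq_iff)

lemma bead_Suc_minus_1: "bead l (Suc q) c - 1 = bead l q c"
  unfolding bead_def by simp

lemma bead_0_minus_1: "0 < l \<Longrightarrow> bead l 0 (c + 1) - 1 = bead l (l - 1) c"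
  unfolding bead_def by (simp add: algebra_simps of_nat_diff)

lemma bead_0_le_iff:
  assumes "q < l"
  shows "bead l 0 c \<le> bead l q c' \<longleftrightarrow> c \<le> c'"
proof
  assume "bead l 0 c \<le> bead l q c'"
  then have "int l * (c - 1) < int l * (c' - 1) + int l" using assms unfolding bead_def by simp
  then have "int l * (c - 1) < int l * c'" by (simp add: algebra_simps)
  then show "c \<le> c'" using assms by (simp add: mult_less_cancel_left)
next
  assume "c \<le> c'"
  then have "int l * (c - 1) \<le> int l * (c' - 1)" by (intro mult_left_mono) auto
  then show "bead l 0 c \<le> bead l q c'" unfolding bead_def by simp
qed

lemma infinite_runner:
  assumes "beta_cut r B N" "q < l"
  shows "infinite (runner l B q)"
proof -
  have "{..<min 0 N} \<subseteq> runner l B q"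
  proof
    fix c assume "c \<in> {..<min 0 N}"
    then have c: "c < 0" "c < N" by auto
    have "int l * c \<le> 1 * c" using assms(2) c by (intro mult_right_mono_neg) auto
    moreover have "bead l q c \<le> int l * c" using assms(2) unfolding bead_def by (simp add: algebra_simps)
    ultimately have "bead l q c < N" using c by linarith
    then show "c \<in> runner l B q" using assms unfolding beta_cut_def runner_def by auto
  qed
  then show ?thesis using infinite_Iio finite_subset by blast
qed

lemma bdd_above_runner:
  assumes "beta_cut r B N"
  shows "bdd_above (runner l B q)"
proof -
  have "B \<subseteq> {..N} \<union> (B \<inter> {N..})" by auto
  moreover have "bdd_above ({..N} \<union> (B \<inter> {N..}))"
    using assms unfolding beta_cut_def by (simp add: bdd_above_finite)
  ultimately obtain b where b: "\<And>y. y \<in> B \<Longrightarrow> y \<le> b" by (meson bdd_above.E bdd_above_mono)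
  have "c \<le> max 1 b" if "c \<in> runner l B q" for c
  proof (cases "1 \<le> c")
    case True
    have "bead l q c \<le> b" using that b unfolding runner_def by (simp split: if_splits)
    moreover have "c - 1 \<le> int l * (c - 1)" using True that unfolding runner_def
      by (simp split: if_splits add: mult_le_cancel_right1)
    ultimately show ?thesis unfolding bead_def by simp
  qed simp
  then show ?thesis by (rule bdd_aboveI)
qed

lemma beta_cut_chi:
  assumes "0 < l" "\<And>q. q < l \<Longrightarrow> beta_cut (s q) (C q) M"
  shows "beta_cut (\<Sum>q<l. s q) (chi l C) (bead l 0 M)"
proof -
  let ?N = "bead l 0 M"
  let ?Sg = "SIGMA q:{..<l}. C q \<inter> {M..}"
  have "{..<?N} \<subseteq> chi l C"
  proof
    fix y assume "y \<in> {..<?N}"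
    moreover obtain q c where qc: "q < l" "y = bead l q c" using bead_cases[OF assms(1)] .
    ultimately have "c < M" using bead_0_le_iff[OF qc(1)] by (metis lessThan_iff not_le)
    then have "c \<in> C q" using assms(2)[OF qc(1)] unfolding beta_cut_def by auto
    then show "y \<in> chi l C" using qc unfolding chi_eq_bead_image by blast
  qed
  have above: "chi l C \<inter> {?N..} = (\<lambda>(q, c). bead l q c) ` ?Sg"
  proof (intro equalityI subsetI)
    fix y assume "y \<in> chi l C \<inter> {?N..}"
    then obtain q c where "q < l" "c \<in> C q" "y = bead l q c" "?N \<le> y"
      unfolding chi_eq_bead_image by auto
    then show "y \<in> (\<lambda>(q, c). bead l q c) ` ?Sg"
      using bead_0_le_iff by (auto intro!: image_eqI[of _ _ "(q, c)"])
  next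
    fix y assume "y \<in> (\<lambda>(q, c). bead l q c) ` ?Sg"
    then obtain q c where "q < l" "c \<in> C q" "M \<le> c" "y = bead l q c" by auto
    then show "y \<in> chi l C \<inter> {?N..}" using bead_0_le_iff unfolding chi_eq_bead_image by auto
  qed
  have "inj_on (\<lambda>(q, c). bead l q c) ?Sg"
    by (rule inj_onI) (auto simp: bead_eq_iff)
  moreover have fin: "finite (C q \<inter> {M..})" and card: "int (card (C q \<inter> {M..})) = s q + 1 - M"
    if "q < l" for q
    using assms(2)[OF that] unfolding beta_cut_def by auto
  ultimately have "int (card (chi l C \<inter> {?N..})) = (\<Sum>q<l. int (card (C q \<inter> {M..})))"
    unfolding above by (simp add: card_image card_SigmaI)
  also have "\<dots> = (\<Sum>q<l. s q + 1 - M)" using card by simp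
  also have "\<dots> = (\<Sum>q<l. s q) + 1 - ?N"
    unfolding bead_def by (simp add: sum.distrib sum_subtractf algebra_simps)
  finally show ?thesis
    using \<open>{..<?N} \<subseteq> chi l C\<close> fin unfolding beta_cut_def above by auto
qed

lemma tau_beta_set:
  assumes "0 < l" "\<And>q. q < l \<Longrightarrow> is_partition (lams q)"
  shows "is_partition (tau l s lams)"
    and "beta_set (\<Sum>q<l. s q) (tau l s lams) = chi l (\<lambda>q. beta_set (s q) (lams q))"
proof -
  let ?C = "\<lambda>q. beta_set (s q) (lams q)"
  have "eventually (\<lambda>M. \<forall>q\<in>{..<l}. beta_cut (s q) (?C q) M) at_bot"
    using assms(2) eventually_beta_cut by (intro eventually_ball_finite) auto
  then obtain M where "\<And>q. q < l \<Longrightarrow> beta_cut (s q) (?C q) M"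
    unfolding eventually_at_bot_linorder by auto
  then obtain nu where nu: "is_partition nu" "beta_set (\<Sum>q<l. s q) nu = chi l ?C"
    using beta_cut_imp_partition[OF beta_cut_chi[OF assms(1), of s ?C M]] by blast
  have "tau l s lams = nu"
    unfolding tau_def
  proof (rule the_equality)
    fix mu assume "is_partition mu \<and> beta_set (\<Sum>q<l. s q) mu = chi l ?C"
    then show "mu = nu" using nu beta_set_inject by metis
  qed (use nu in simp)
  then show "is_partition (tau l s lams)" "beta_set (\<Sum>q<l. s q) (tau l s lams) = chi l ?C"
    using nu by simp_all
qed

section \<open>The parameter \<open>\<epsilon>\<close>\<close>

lemma perm_word_append: "perm_word (ws @ vs) = perm_word ws \<circ> perm_word vs"
  unfolding perm_word_def by (induction ws) auto

lemma ex_perm_word_transpose: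
  assumes "a < b" "b < l"
  shows "\<exists>ws. set ws \<subseteq> {1..<l} \<and> perm_word ws = Transposition.transpose a b"
  using assms
proof (induction b)
  case (Suc b)
  have adjacent: "perm_word [Suc b] = Transposition.transpose b (Suc b)"
    unfolding perm_word_def by simp
  show ?case
  proof (cases "a = b")
    case True
    then show ?thesis using adjacent Suc.prems by (intro exI[of _ "[Suc b]"]) auto
  next
    case False
    then obtain ws where ws: "set ws \<subseteq> {1..<l}" "perm_word ws = Transposition.transpose a b"
      using Suc by auto
    have "Transposition.transpose a (Suc b)
        = Transposition.transpose b (Suc b) \<circ> Transposition.transpose a b \<circ> Transposition.transpose b (Suc b)"
      using False Suc.prems by (intro ext) (simp add: Transposition.transpose_def)
    then have "perm_word ([Suc b] @ ws @ [Suc b]) = Transposition.transpose a (Suc b)"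
      unfolding perm_word_append adjacent ws(2) by (simp add: comp_assoc)
    then show ?thesis using ws(1) Suc.prems by (intro exI[of _ "[Suc b] @ ws @ [Suc b]"]) auto
  qed
qed simp

lemma ex_perm_word:
  assumes "w permutes {..<l}"
  shows "\<exists>ws. set ws \<subseteq> {1..<l} \<and> perm_word ws = w"
  using assms finite_lessThan
proof (induction rule: permutes_induct)
  case id
  then show ?case by (intro exI[of _ "[]"]) (simp add: perm_word_def)
next
  case (swap a b p)
  then obtain vs where vs: "set vs \<subseteq> {1..<l}" "perm_word vs = p" by blast
  obtain ws where "set ws \<subseteq> {1..<l}" "perm_word ws = Transposition.transpose a b"
    using ex_perm_word_transpose[of a b l] ex_perm_word_transpose[of b a l] swap(1-3)
    by (cases "a < b") (auto simp: transpose_commute)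
  then show ?case using vs by (intro exI[of _ "ws @ vs"]) (auto simp: perm_word_append)
qed

lemma sum_alpha: "0 < l \<Longrightarrow> (\<Sum>j<l. alpha l i j) = 0"
  unfolding alpha_def by (simp add: sum_subtractf sum.delta)

lemma act_word_integral_and_sum:
  assumes "0 < l" "set ws \<subseteq> {..<l}" "\<And>k. k < l \<Longrightarrow> of_nat d * th k \<in> \<int>"
  shows "\<forall>k<l. of_nat d * act_word l ws th k \<in> \<int>"
    and "(\<Sum>k<l. act_word l ws th k) = (\<Sum>k<l. th k)"
proof -
  have "(\<forall>k<l. of_nat d * act_word l ws th k \<in> \<int>) \<and> (\<Sum>k<l. act_word l ws th k) = (\<Sum>k<l. th k)"
    using assms(2)
  proof (induction ws)
    case Nil
    then show ?case using assms(3) unfolding act_word_def by simp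
  next
    case (Cons i ws)
    let ?th = "act_word l ws th"
    have i: "i < l" and IH: "\<forall>k<l. of_nat d * ?th k \<in> \<int>" "(\<Sum>k<l. ?th k) = (\<Sum>k<l. th k)"
      using Cons by auto
    have step: "act_word l (i # ws) th = s_act l i ?th" unfolding act_word_def by simp
    have "of_nat d * s_act l i ?th k = of_nat d * ?th k - (of_nat d * ?th i) * of_int (alpha l i k)" for k
      unfolding s_act_def by (simp add: algebra_simps)
    moreover have "(\<Sum>k<l. s_act l i ?th k) = (\<Sum>k<l. ?th k) - ?th i * of_int (\<Sum>k<l. alpha l i k)"
      unfolding s_act_def by (simp add: sum_subtractf sum_distrib_left)
    ultimately show ?case unfolding step using IH i sum_alpha[OF assms(1)] by simp
  qed
  then show "\<forall>k<l. of_nat d * act_word l ws th k \<in> \<int>" "(\<Sum>k<l. act_word l ws th k) = (\<Sum>k<l. th k)"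
    by simp_all
qed

lemma sum_theta:
  assumes "0 < l"
  shows "(\<Sum>k<l. theta l H k) = 1"
proof -
  have "{..<l} = insert 0 {1..<l}" using assms by auto
  moreover have "(\<Sum>k\<in>{1..<l}. theta l H k) = (\<Sum>k\<in>{1..<l}. H k)"
    unfolding theta_def by (rule sum.cong) auto
  ultimately show ?thesis unfolding theta_def by simp
qed

lemma sum_phi: "0 < l \<Longrightarrow> (\<Sum>j<l. phi l r j) = 0"
proof -
  assume "0 < l"
  then obtain m where l: "l = Suc m" using not0_implies_Suc by blast
  have "(\<Sum>j<l. r ((j + l - 1) mod l)) = r m + (\<Sum>i<m. r ((i + Suc m) mod Suc m))"
    unfolding l sum.lessThan_Suc_shift by simp
  also have "(\<Sum>i<m. r ((i + Suc m) mod Suc m)) = (\<Sum>i<m. r i)"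
    by (intro sum.cong) (simp_all only: mod_add_self2, auto)
  finally show ?thesis unfolding phi_def l by (simp add: sum_subtractf)
qed

lemma eps_integral_and_sum:
  assumes "0 < l" "\<forall>i\<in>{1..<l}. of_nat d * H i \<in> \<int>" "w permutes {..<l}"
  shows "\<forall>k<l. of_nat d * eps l H r w k \<in> \<int>" and "(\<Sum>k<l. eps l H r w k) = 1"
proof -
  define ws where "ws = (SOME ws. set ws \<subseteq> {1..<l} \<and> perm_word ws = w)"
  have ws: "set ws \<subseteq> {..<l}" using someI_ex[OF ex_perm_word[OF assms(3)]] unfolding ws_def by auto
  have eps: "eps l H r w k = act_word l ws (theta l H) k + of_int (phi l r k)" for k
    unfolding eps_def Sl_act_def ws_def ..
  have "of_nat d * theta l H k \<in> \<int>" if "k < l" for k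
  proof (cases "k = 0")
    case True
    have "of_nat d * theta l H k = of_nat d - (\<Sum>j\<in>{1..<l}. of_nat d * H j)"
      unfolding theta_def using True by (simp add: algebra_simps sum_distrib_left)
    moreover have "(\<Sum>j\<in>{1..<l}. of_nat d * H j) \<in> \<int>" using assms(2) by (intro Ints_sum) auto
    ultimately show ?thesis by simp
  qed (use assms(2) that in \<open>simp add: theta_def\<close>)
  note act = act_word_integral_and_sum[OF assms(1) ws this]
  show "\<forall>k<l. of_nat d * eps l H r w k \<in> \<int>"
    using act(1) by (simp add: eps distrib_left)
  show "(\<Sum>k<l. eps l H r w k) = 1"
    using act(2) sum_theta[OF assms(1)] sum_phi[OF assms(1)]
    by (simp add: eps sum.distrib flip: of_int_sum)
qed

lemma card_filter_move:
  assumes "finite I" "a \<noteq> b" "a \<in> I \<longleftrightarrow> b \<in> I" "x0 \<in> E a" "x0 \<notin> E b"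
    and moved: "\<And>p x. p \<in> I \<Longrightarrow> x \<in> E' p \<longleftrightarrow> (p = b \<and> x = x0) \<or> (x \<in> E p \<and> \<not> (p = a \<and> x = x0))"
  shows "card {p \<in> I. x \<in> E' p} = card {p \<in> I. x \<in> E p}"
proof (cases "x = x0 \<and> a \<in> I")
  case True
  let ?A = "{p \<in> I. x \<in> E p}"
  have "{p \<in> I. x \<in> E' p} = insert b (?A - {a})"
    using True assms by auto
  moreover have "a \<in> ?A" "b \<notin> ?A - {a}" "finite ?A" using True assms(1,4,5) by auto
  ultimately show ?thesis using card_Suc_Diff1[of ?A a] by simp
next
  case False
  then have "{p \<in> I. x \<in> E' p} = {p \<in> I. x \<in> E p}" using assms(3) moved by auto
  then show ?thesis by simp
qed

text \<open>Down-sets of a finite chain are determined by their cardinality.\<close>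
lemma antitone_family_unique:
  fixes pos :: "'a \<Rightarrow> nat"
  assumes "finite I" "inj_on pos I"
    and E1: "\<And>p p'. p \<in> I \<Longrightarrow> p' \<in> I \<Longrightarrow> pos p' < pos p \<Longrightarrow> E1 p \<subseteq> E1 p'"
    and E2: "\<And>p p'. p \<in> I \<Longrightarrow> p' \<in> I \<Longrightarrow> pos p' < pos p \<Longrightarrow> E2 p \<subseteq> E2 p'"
    and "\<And>x. card {p \<in> I. x \<in> E1 p} = card {p \<in> I. x \<in> E2 p}"
    and "p \<in> I"
  shows "E1 p = E2 p"
proof -
  have subset: "{p \<in> I. x \<in> F1 p} \<subseteq> {p \<in> I. x \<in> F2 p}"
    if F1: "\<And>p p'. p \<in> I \<Longrightarrow> p' \<in> I \<Longrightarrow> pos p' < pos p \<Longrightarrow> F1 p \<subseteq> F1 p'"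
    and F2: "\<And>p p'. p \<in> I \<Longrightarrow> p' \<in> I \<Longrightarrow> pos p' < pos p \<Longrightarrow> F2 p \<subseteq> F2 p'"
    and card: "card {p \<in> I. x \<in> F1 p} = card {p \<in> I. x \<in> F2 p}" for F1 F2 :: "'a \<Rightarrow> 'b set" and x
  proof
    fix p assume p: "p \<in> {p \<in> I. x \<in> F1 p}"
    show "p \<in> {p \<in> I. x \<in> F2 p}"
    proof (rule ccontr)
      assume p_notin: "p \<notin> {p \<in> I. x \<in> F2 p}"
      have "{p \<in> I. x \<in> F2 p} \<subseteq> {p' \<in> I. x \<in> F1 p'} - {p}"
      proof
        fix q assume q: "q \<in> {p \<in> I. x \<in> F2 p}"
        have "pos q < pos p"
        proof (rule linorder_cases[of "pos q" "pos p"])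
          assume "pos q = pos p"
          then show ?thesis using p q p_notin assms(2) by (auto simp: inj_on_def)
        next
          assume "pos p < pos q"
          then show ?thesis using p q p_notin F2[of q p] by auto
        qed
        then show "q \<in> {p' \<in> I. x \<in> F1 p'} - {p}" using p q F1[of p q] by auto
      qed
      then have "card {p \<in> I. x \<in> F2 p} \<le> card ({p' \<in> I. x \<in> F1 p'} - {p})"
        using assms(1) by (intro card_mono) auto
      also have "\<dots> < card {p' \<in> I. x \<in> F1 p'}"
        using assms(1) p by (intro card_Diff1_less) auto
      finally show False using card by simp
    qed
  qed
  show ?thesis
    using subset[OF E1 E2 assms(5)] subset[OF E2 E1 assms(5)[symmetric]] assms(6) by blast
qed

lemma antitone_chain:
  fixes F :: "nat \<Rightarrow> 'b set"
  assumes "\<And>k. p' < k \<Longrightarrow> k \<le> p \<Longrightarrow> F k \<subseteq> F (k - 1)" "p' \<le> p"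
  shows "F p \<subseteq> F p'"
  using assms(2,1)
proof (induction p rule: dec_induct)
  case (step k)
  then show ?case using step.prems[of "Suc k"] by force
qed simp

section \<open>Blocks of runners\<close>

locale abacus_blocks =
  fixes l d :: nat and e :: "nat \<Rightarrow> rat"
  assumes l_pos: "0 < l" and d_pos: "0 < d"
    and e_nonneg: "\<And>k. k < l \<Longrightarrow> 0 \<le> e k"
    and d_e_integral: "\<And>k. k < l \<Longrightarrow> of_nat d * e k \<in> \<int>"
    and sum_e: "(\<Sum>k<l. e k) = 1"
begin

definition level :: "nat \<Rightarrow> rat" where
  "level p = (\<Sum>k\<le>p. of_nat d * e k)"

lemma Iset_iff: "p \<in> Iset l d e t \<longleftrightarrow> p < l \<and> level p = of_nat t"
  unfolding Iset_def level_def by simp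

lemma Iset_subset: "Iset l d e t \<subseteq> {..<l}"
  using Iset_iff by auto

lemma finite_Iset: "finite (Iset l d e t)"
  using Iset_subset finite_subset by blast

lemma level_Suc: "level (Suc p) = level p + of_nat d * e (Suc p)"
  unfolding level_def by simp

lemma level_mono:
  assumes "p \<le> p'" "p' < l"
  shows "level p \<le> level p'"
  using assms
proof (induction p' rule: dec_induct)
  case (step k)
  then have "0 \<le> of_nat d * e (Suc k)" using e_nonneg[of "Suc k"] by simp
  then show ?case using step level_Suc[of k] by simp
qed simp

lemma zero_in_Iset_0:
  assumes "p \<in> Iset l d e 0"
  shows "0 \<in> Iset l d e 0"
proof -
  have "0 \<le> level 0" using e_nonneg[of 0] l_pos unfolding level_def by simp
  moreover have "level 0 \<le> level p" using assms level_mono[of 0 p] unfolding Iset_iff by simp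
  ultimately show ?thesis using assms l_pos unfolding Iset_iff by simp
qed

lemma level_last: "level (l - 1) = of_nat d"
proof -
  have "{..l - 1} = {..<l}" using l_pos by auto
  then show ?thesis unfolding level_def using sum_e by (simp flip: sum_distrib_left)
qed

lemma level_nat:
  assumes "p < l"
  obtains t where "t \<le> d" "level p = of_nat t"
proof -
  have "level p \<in> \<int>" unfolding level_def using d_e_integral assms by (intro Ints_sum) auto
  then obtain z where z: "level p = of_int z" by (auto elim: Ints_cases)
  have "0 \<le> of_nat d * e 0" using e_nonneg[of 0] l_pos by simp
  then have "0 \<le> z" using level_mono[of 0 p] assms z unfolding level_def by simp
  moreover have "of_int z \<le> (of_int (int d) :: rat)" using level_mono[of p "l - 1"] assms z level_last
    by simp
  then have "z \<le> int d" by linarith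
  ultimately show ?thesis using z that[of "nat z"] by simp
qed

lemma Jset_iff_level_eq:
  assumes "1 \<le> p" "p < l"
  shows "p \<in> Jset l e \<longleftrightarrow> level p = level (p - 1)"
  using level_Suc[of "p - 1"] assms d_pos unfolding Jset_def by simp

lemma zero_in_Jset_iff: "0 \<in> Jset l e \<longleftrightarrow> level 0 = 0"
  using d_pos l_pos unfolding Jset_def level_def by simp

lemma two_le_l_if_zero_in_Jset: "0 \<in> Jset l e \<Longrightarrow> 2 \<le> l"
  using l_pos sum_e unfolding Jset_def by (cases "l = 1") auto

lemma in_Jset_between:
  assumes "p' \<in> Iset l d e t" "p \<in> Iset l d e t" "p' < k" "k \<le> p"
  shows "k \<in> Jset l e"
proof -
  have "p < l" using assms(2) unfolding Iset_iff by simp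
  then have "level p' \<le> level (k - 1)" "level (k - 1) \<le> level k" "level k \<le> level p"
    using level_mono assms(3,4) by simp_all
  then have "level k = level (k - 1)" using assms(1,2) unfolding Iset_iff by simp
  then show ?thesis using Jset_iff_level_eq[of k] assms(3,4) \<open>p < l\<close> by simp
qed

lemma last_in_Iset_d: "l - 1 \<in> Iset l d e d"
  using level_last l_pos unfolding Iset_iff by simp

lemma Iset_disjoint: "t \<noteq> t' \<Longrightarrow> p \<in> Iset l d e t \<Longrightarrow> p \<notin> Iset l d e t'"
  unfolding Iset_iff by auto

text \<open>The runners entering \<open>C\<^sub>[\<^sub>t\<^sub>]\<close>: those of level \<open>t\<close>, where \<open>C\<^sub>[\<^sub>0\<^sub>] = C\<^sub>[\<^sub>d\<^sub>]\<close> collects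
  the runners of level \<open>0\<close> and \<open>d\<close>; the former enter shifted by \<open>S\<^sup>-\<^sup>1\<close>.\<close>
definition block :: "nat \<Rightarrow> nat set" where
  "block t = (if 1 \<le> t \<and> t \<le> d - 1 then Iset l d e t else Iset l d e 0 \<union> Iset l d e d)"

definition offset :: "nat \<Rightarrow> int" where
  "offset p = of_bool (p \<in> Iset l d e 0)"

definition shifted :: "(nat \<Rightarrow> int set) \<Rightarrow> nat \<Rightarrow> int set" where
  "shifted C p = {x. x + offset p \<in> C p}"

lemma block_subset: "block t \<subseteq> {..<l}"
  unfolding block_def using Iset_subset by auto

lemma finite_block: "finite (block t)"
  unfolding block_def using finite_Iset by simp

lemma block_iff:
  "p \<in> block t \<longleftrightarrow>
    p < l \<and> (if 1 \<le> t \<and> t \<le> d - 1 then level p = of_nat t else level p = 0 \<or> level p = of_nat d)"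
  unfolding block_def by (auto simp: Iset_iff)

lemma not_in_Iset_0_if_level_d: "p \<in> Iset l d e d \<Longrightarrow> p \<notin> Iset l d e 0"
  using Iset_disjoint[of d 0] d_pos by simp

lemma Cbr_eq_card_block: "Cbr l d e C t x = card {p \<in> block t. x \<in> shifted C p}"
proof (cases "1 \<le> t \<and> t \<le> d - 1")
  case True
  then have "offset p = 0" if "p \<in> Iset l d e t" for p
    using that Iset_disjoint[of t 0] unfolding offset_def by auto
  then have "{p \<in> block t. x \<in> shifted C p} = {p \<in> Iset l d e t. x \<in> C p}"
    using True unfolding block_def shifted_def by auto
  then show ?thesis using True unfolding Cbr_def by simp
next
  case False
  then have "{p \<in> block t. x \<in> shifted C p}
      = {p \<in> Iset l d e 0. x + 1 \<in> C p} \<union> {p \<in> Iset l d e d. x \<in> C p}"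
    using not_in_Iset_0_if_level_d unfolding block_def shifted_def offset_def by auto
  moreover have "{p \<in> Iset l d e 0. x + 1 \<in> C p} \<inter> {p \<in> Iset l d e d. x \<in> C p} = {}"
    using not_in_Iset_0_if_level_d by auto
  ultimately show ?thesis
    using finite_Iset unfolding Cbr_def if_not_P[OF False] by (simp add: card_Un_disjoint)
qed

lemma Cbr_cong:
  assumes "\<And>q. q < l \<Longrightarrow> C q = C' q"
  shows "Cbr l d e C t = Cbr l d e C' t"
proof
  fix x
  have "{p \<in> block t. x \<in> shifted C p} = {p \<in> block t. x \<in> shifted C' p}"
    using assms block_subset unfolding shifted_def by auto
  then show "Cbr l d e C t x = Cbr l d e C' t x" unfolding Cbr_eq_card_block by simp
qed

definition J_nested :: "(nat \<Rightarrow> int set) \<Rightarrow> bool" where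
  "J_nested Ct \<longleftrightarrow> (\<forall>p\<in>Jset l e. p \<noteq> 0 \<longrightarrow> Ct p \<subseteq> Ct (p - 1)) \<and>
      (0 \<in> Iset l d e 0 \<longrightarrow> {x. x + 1 \<in> Ct 0} \<subseteq> Ct (l - 1))"

lemma J_nested_level_antitone:
  assumes "J_nested Ct" "p' \<in> Iset l d e t" "p \<in> Iset l d e t" "p' \<le> p"
  shows "Ct p \<subseteq> Ct p'"
proof (rule antitone_chain[OF _ assms(4)])
  fix k assume "p' < k" "k \<le> p"
  then show "Ct k \<subseteq> Ct (k - 1)"
    using in_Jset_between[OF assms(2,3)] assms(1) unfolding J_nested_def by auto
qed

text \<open>Within a block, runners of level \<open>0\<close> come after those of level \<open>d\<close>.\<close>
definition block_pos :: "nat \<Rightarrow> nat" where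
  "block_pos p = (if p \<in> Iset l d e 0 then p + l else p)"

lemma inj_on_block_pos: "inj_on block_pos {..<l}"
  unfolding block_pos_def by (rule inj_onI) (auto split: if_splits)

lemma J_nested_shifted_antitone:
  assumes "J_nested Ct" "p \<in> block t" "p' \<in> block t" "block_pos p' < block_pos p"
  shows "shifted Ct p \<subseteq> shifted Ct p'"
proof -
  have "p < l" "p' < l" using assms(2,3) block_subset by auto
  consider (same) s where "p \<in> Iset l d e s" "p' \<in> Iset l d e s"
    | (wrap) "p \<in> Iset l d e 0" "p' \<in> Iset l d e d"
    | (wrong_order) "p \<in> Iset l d e d" "p' \<in> Iset l d e 0"
    using assms(2,3) unfolding block_def by (cases "1 \<le> t \<and> t \<le> d - 1") auto
  then show ?thesis
  proof cases
    case (same s)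
    then have "offset p = offset p'"
      using Iset_disjoint[of s 0] Iset_disjoint[of 0 s] unfolding offset_def by (cases "s = 0") auto
    moreover have "p' < p"
      using assms(4) same Iset_disjoint[of s 0] Iset_disjoint[of 0 s] unfolding block_pos_def
      by (cases "s = 0") auto
    ultimately show ?thesis using J_nested_level_antitone[OF assms(1) same(2,1)]
      unfolding shifted_def by auto
  next
    case wrap
    have "0 \<in> Iset l d e 0" using zero_in_Iset_0 wrap(1) .
    then have "Ct p \<subseteq> Ct 0" and "{x. x + 1 \<in> Ct 0} \<subseteq> Ct (l - 1)"
      using J_nested_level_antitone[OF assms(1) _ wrap(1)] assms(1) unfolding J_nested_def by auto
    moreover have "Ct (l - 1) \<subseteq> Ct p'"
      using J_nested_level_antitone[OF assms(1) wrap(2) last_in_Iset_d] \<open>p' < l\<close> by simp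
    moreover have "offset p = 1" "offset p' = 0"
      using wrap not_in_Iset_0_if_level_d unfolding offset_def by auto
    ultimately show ?thesis unfolding shifted_def by auto
  next
    case wrong_order
    then show ?thesis
      using assms(4) \<open>p < l\<close> not_in_Iset_0_if_level_d unfolding block_pos_def by simp
  qed
qed

lemma J_nested_unique:
  assumes "J_nested A" "J_nested B" "\<And>t. t \<le> d \<Longrightarrow> Cbr l d e A t = Cbr l d e B t" "q < l"
  shows "A q = B q"
proof -
  obtain t where t: "t \<le> d" "level q = of_nat t" using level_nat[OF assms(4)] .
  then have q: "q \<in> block t" using assms(4) unfolding block_iff by auto
  have "shifted A q = shifted B q"
  proof (rule antitone_family_unique[OF finite_block inj_on_subset[OF inj_on_block_pos block_subset]])
    show "card {p \<in> block t. x \<in> shifted A p} = card {p \<in> block t. x \<in> shifted B p}" for x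
      using assms(3)[OF t(1)] unfolding Cbr_eq_card_block by metis
  qed (use J_nested_shifted_antitone[OF assms(1)] J_nested_shifted_antitone[OF assms(2)] q in blast)+
  show ?thesis
  proof (rule set_eqI)
    fix x
    have "x \<in> A q \<longleftrightarrow> x - offset q \<in> shifted A q" "x \<in> B q \<longleftrightarrow> x - offset q \<in> shifted B q"
      unfolding shifted_def by simp_all
    then show "x \<in> A q \<longleftrightarrow> x \<in> B q" using \<open>shifted A q = shifted B q\<close> by simp
  qed
qed

section \<open>Removing \<open>J\<close>-removable nodes\<close>

lemma shifted_runner_move:
  assumes "a < l" "b < l" "bead l a (x0 + offset a) = v" "bead l b (x0 + offset b) = v - 1" "p < l"
  shows "x \<in> shifted (runner l (insert (v - 1) (B - {v}))) p \<longleftrightarrow>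
    (p = b \<and> x = x0) \<or> (x \<in> shifted (runner l B) p \<and> \<not> (p = a \<and> x = x0))"
proof -
  have "bead l p (x + offset p) = v \<longleftrightarrow> p = a \<and> x = x0"
    using bead_eq_iff[OF assms(5,1)] assms(3)[symmetric] by auto
  moreover have "bead l p (x + offset p) = v - 1 \<longleftrightarrow> p = b \<and> x = x0"
    using bead_eq_iff[OF assms(5,2)] assms(4)[symmetric] by auto
  ultimately show ?thesis using assms(5) unfolding shifted_def runner_def by auto
qed

lemma J_bead_move:
  assumes "j \<in> Jset l e" "(v - 1) mod int l = int j"
  obtains a b x0 where "a < l" "b < l" "a \<noteq> b" "\<And>t. a \<in> block t \<longleftrightarrow> b \<in> block t"
    "bead l a (x0 + offset a) = v" "bead l b (x0 + offset b) = v - 1"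
proof -
  have j: "j < l" using assms(1) unfolding Jset_def by simp
  define c where "c = (v - 1) div int l + 1"
  have "v - 1 = (v - 1) div int l * int l + int j"
    using div_mult_mod_eq[of "v - 1" "int l"] assms(2) by simp
  then have v: "v = bead l j c" unfolding bead_def c_def by (simp add: algebra_simps)
  show ?thesis
  proof (cases "j = 0")
    case False
    then have "level j = level (j - 1)" using Jset_iff_level_eq[of j] assms(1) j by simp
    then have "offset j = offset (j - 1)" "\<And>t. j \<in> block t \<longleftrightarrow> j - 1 \<in> block t"
      using j unfolding offset_def Iset_iff block_iff by auto
    moreover have "bead l (j - 1) c = v - 1" using bead_Suc_minus_1[of l "j - 1" c] False v by simp
    ultimately show ?thesis using that[of j "j - 1" "c - offset j"] j False v by simp
  next
    case True
    then have level: "level 0 = 0" "level (l - 1) = of_nat d" and "2 \<le> l"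
      using assms(1) zero_in_Jset_iff level_last two_le_l_if_zero_in_Jset by auto
    then have "offset 0 = 1" "offset (l - 1) = 0" "\<And>t. 0 \<in> block t \<longleftrightarrow> l - 1 \<in> block t"
      using d_pos unfolding offset_def Iset_iff block_iff by auto
    moreover have "bead l (l - 1) (c - 1) = v - 1" using bead_0_minus_1[of l "c - 1"] l_pos True v by simp
    ultimately show ?thesis using that[of 0 "l - 1" "c - 1"] \<open>2 \<le> l\<close> True v by simp
  qed
qed

lemma Cbr_runner_remove_step:
  assumes "remove_step l (Jset l e) lam mu"
  shows "Cbr l d e (runner l (beta_set 0 mu)) t = Cbr l d e (runner l (beta_set 0 lam)) t"
proof -
  obtain x where parts: "is_partition lam" "is_partition mu"
    and x: "J_removable l (Jset l e) lam x" "young mu = young lam - {x}"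
    using assms unfolding remove_step_def by blast
  have "x \<in> young lam" using x(1) unfolding J_removable_def removable_def by blast
  note move = beta_set_remove_node[OF parts this x(2)]
  let ?v = "content x + 1" and ?B = "beta_set 0 lam"
  obtain j where j: "j \<in> Jset l e" "content x mod int l = int j mod int l"
    using x(1) unfolding J_removable_def by blast
  then have "(?v - 1) mod int l = int j" unfolding Jset_def by simp
  then obtain a b x0 where ab: "a < l" "b < l" "a \<noteq> b" "\<And>t. a \<in> block t \<longleftrightarrow> b \<in> block t"
    and beads: "bead l a (x0 + offset a) = ?v" "bead l b (x0 + offset b) = ?v - 1"
    using J_bead_move[OF j(1)] by blast
  have "x0 \<in> shifted (runner l ?B) a" "x0 \<notin> shifted (runner l ?B) b"
    using move(1,2) beads ab(1,2) unfolding shifted_def runner_def by simp_all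
  note card_move = card_filter_move[OF finite_block ab(3,4) this]
  show ?thesis
  proof
    fix y
    have "card {p \<in> block t. y \<in> shifted (runner l (beta_set 0 mu)) p}
        = card {p \<in> block t. y \<in> shifted (runner l ?B) p}"
    proof (rule card_move)
      fix p z assume "p \<in> block t"
      then have "p < l" using block_subset by auto
      then show "z \<in> shifted (runner l (beta_set 0 mu)) p \<longleftrightarrow>
          (p = b \<and> z = x0) \<or> (z \<in> shifted (runner l ?B) p \<and> \<not> (p = a \<and> z = x0))"
        unfolding move(3) by (rule shifted_runner_move[OF ab(1,2) beads])
    qed
    then show "Cbr l d e (runner l (beta_set 0 mu)) t y = Cbr l d e (runner l ?B) t y"
      unfolding Cbr_eq_card_block .
  qed
qed

lemma Cbr_runner_remove_steps:
  assumes "(remove_step l (Jset l e))\<^sup>*\<^sup>* lam nu" "is_partition lam"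
  shows "is_partition nu \<and>
    (\<forall>t. Cbr l d e (runner l (beta_set 0 nu)) t = Cbr l d e (runner l (beta_set 0 lam)) t)"
  using assms(1)
proof (induction rule: rtranclp_induct)
  case (step mu nu)
  then show ?case using Cbr_runner_remove_step[OF step(2)] unfolding remove_step_def by simp
qed (use assms(2) in simp)

lemma J_nested_runner_if_no_J_removable:
  assumes "is_partition nu" "\<not> (\<exists>x. J_removable l (Jset l e) nu x)"
  shows "J_nested (runner l (beta_set 0 nu))"
  unfolding J_nested_def
proof (intro conjI ballI impI subsetI)
  fix p y assume p: "p \<in> Jset l e" "p \<noteq> 0" and "y \<in> runner l (beta_set 0 nu) p"
  then have "p < l" "bead l p y \<in> beta_set 0 nu" unfolding Jset_def runner_def by auto
  then have "bead l p y - 1 \<in> beta_set 0 nu"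
    using pred_in_beta_set_if_no_J_removable[OF assms _ p(1)] bead_minus_1_mod by simp
  then show "y \<in> runner l (beta_set 0 nu) (p - 1)"
    using bead_Suc_minus_1[of l "p - 1" y] p(2) \<open>p < l\<close> unfolding runner_def by simp
next
  fix y assume "0 \<in> Iset l d e 0" and "y \<in> {x. x + 1 \<in> runner l (beta_set 0 nu) 0}"
  then have "0 \<in> Jset l e" "bead l 0 (y + 1) \<in> beta_set 0 nu"
    using zero_in_Jset_iff l_pos unfolding Iset_iff runner_def by auto
  then have "bead l 0 (y + 1) - 1 \<in> beta_set 0 nu"
    using pred_in_beta_set_if_no_J_removable[OF assms] bead_minus_1_mod l_pos by simp
  then show "y \<in> runner l (beta_set 0 nu) (l - 1)"
    using bead_0_minus_1[OF l_pos] l_pos unfolding runner_def by simp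
qed

definition Ctilde_spec :: "(nat \<Rightarrow> int set) \<Rightarrow> (nat \<Rightarrow> int set) \<Rightarrow> bool" where
  "Ctilde_spec C Ct \<longleftrightarrow> (\<forall>q<l. infinite (Ct q) \<and> bdd_above (Ct q)) \<and> (\<forall>q\<ge>l. Ct q = {}) \<and>
      (\<forall>t\<le>d. Cbr l d e Ct t = Cbr l d e C t) \<and> J_nested Ct"

lemma Ctilde_eq_The: "Ctilde l d e C = (THE Ct. Ctilde_spec C Ct)"
  unfolding Ctilde_def Ctilde_spec_def J_nested_def by simp

lemma Ctilde_spec_unique:
  assumes "Ctilde_spec C A" "Ctilde_spec C B"
  shows "A = B"
proof
  fix q
  show "A q = B q"
  proof (cases "q < l")
    case True
    then show ?thesis using assms J_nested_unique unfolding Ctilde_spec_def by simp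
  qed (use assms in \<open>simp add: Ctilde_spec_def\<close>)
qed

lemma Ctilde_spec_J_heart:
  assumes "is_partition lam" "\<And>q. q < l \<Longrightarrow> C q = runner l (beta_set 0 lam) q"
    and "(remove_step l (Jset l e))\<^sup>*\<^sup>* lam nu" "\<not> (\<exists>x. J_removable l (Jset l e) nu x)"
  shows "Ctilde_spec C (runner l (beta_set 0 nu))"
proof -
  note nu = Cbr_runner_remove_steps[OF assms(3,1)]
  obtain N where "beta_cut 0 (beta_set 0 nu) N"
    using eventually_beta_cut[OF conjunct1[OF nu]] unfolding eventually_at_bot_linorder by blast
  moreover have "Cbr l d e C t = Cbr l d e (runner l (beta_set 0 lam)) t" for t
    using assms(2) by (rule Cbr_cong)
  moreover have "runner l (beta_set 0 nu) q = {}" if "l \<le> q" for q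
    using that unfolding runner_def by simp
  ultimately show ?thesis
    unfolding Ctilde_spec_def using nu infinite_runner bdd_above_runner J_nested_runner_if_no_J_removable assms(4)
    by metis
qed

theorem beta_set_J_heart:
  assumes "is_partition lam" "\<And>q. q < l \<Longrightarrow> C q = runner l (beta_set 0 lam) q"
  shows "beta_set 0 (heart l (Jset l e) lam) = chi l (Ctilde l d e C)"
proof -
  obtain nu where nu: "(remove_step l (Jset l e))\<^sup>*\<^sup>* lam nu" "\<not> (\<exists>x. J_removable l (Jset l e) nu x)"
    using ex_J_heart[OF assms(1)] by blast
  have spec: "Ctilde_spec C (runner l (beta_set 0 nu'))"
    if "(remove_step l (Jset l e))\<^sup>*\<^sup>* lam nu'" "\<not> (\<exists>x. J_removable l (Jset l e) nu' x)" for nu'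
    using Ctilde_spec_J_heart assms that by blast
  have "heart l (Jset l e) lam = nu"
    unfolding heart_def
  proof (rule the_equality)
    fix nu' assume nu': "(remove_step l (Jset l e))\<^sup>*\<^sup>* lam nu' \<and> \<not> (\<exists>x. J_removable l (Jset l e) nu' x)"
    then have "runner l (beta_set 0 nu') = runner l (beta_set 0 nu)"
      using Ctilde_spec_unique spec nu by blast
    then have "beta_set 0 nu' = beta_set 0 nu" using chi_runner[OF l_pos] by metis
    then show "nu' = nu" using beta_set_inject Cbr_runner_remove_steps[OF _ assms(1)] nu(1) nu' by blast
  qed (use nu in blast)
  moreover have "Ctilde l d e C = runner l (beta_set 0 nu)"
    unfolding Ctilde_eq_The using spec[OF nu] Ctilde_spec_unique by blast
  ultimately show ?thesis using chi_runner[OF l_pos] by simp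
qed

end

theorem theorem3p11:
  fixes l n d :: nat and H :: "nat \<Rightarrow> rat" and r :: "nat \<Rightarrow> int" and w :: "nat \<Rightarrow> nat"
    and lams :: "nat \<Rightarrow> nat \<Rightarrow> nat"
  assumes "0 < l" and "0 < n" and "0 < d"
    and "\<forall>i\<in>{1..<l}. of_nat d * H i \<in> \<int>"
    and "(\<Sum>i<l. r i) = 0"
    and "w permutes {..<l}"
    and "\<forall>i<l. 0 \<le> eps l H r w i \<and> eps l H r w i \<le> 1"
    and "lams \<in> multipartitions l n"
  shows "beta_set 0 (heart l (Jset l (eps l H r w)) (tau l r (perm_mp w lams)))
         = chi l (Ctilde l d (eps l H r w) (Cseq r w lams))"
proof -
  interpret abacus_blocks l d "eps l H r w"
    using assms(1,3,7) eps_integral_and_sum[OF assms(1,4,6)] by unfold_locales auto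
  have "is_partition (perm_mp w lams q)" if "q < l" for q
    using assms(8) permutes_in_image[OF permutes_inv[OF assms(6)]] that
    unfolding multipartitions_def perm_mp_def by auto
  then have tau: "is_partition (tau l r (perm_mp w lams))"
      "beta_set 0 (tau l r (perm_mp w lams)) = chi l (Cseq r w lams)"
    using tau_beta_set[where s = r, OF assms(1)] unfolding assms(5) Cseq_def perm_mp_def by simp_all
  then have "Cseq r w lams q = runner l (beta_set 0 (tau l r (perm_mp w lams))) q" if "q < l" for q
    using runner_chi[OF that] by simp
  then show ?thesis by (rule beta_set_J_heart[OF tau(1)])
qed

end
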